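(* Let $\Gamma_M$ ($M>0$) be a family of nonatomic routing games with a single OD pair with demand $M$, sharing the same graph, path set and edge costs $(c_e)_{e\in\mathcal E}$. Suppose that for every edge $e$ there is $q_e\ge 0$ such that $\lim_{x\to \infty}c_e(x)/x^{q_e}$ is finite and nonzero. Then $\mathrm{PoA}(\Gamma_M)\to 1$ as $M\to \infty$.
   Context: A nonatomic routing game with a single OD pair consists of a finite directed multigraph with edge set $\mathcal E$, a nonempty finite set $\mathcal P$ of paths from an origin to a destination, a demand $M>0$, and continuous nondecreasing edge costs $c_e:[0,\infty)\to[0,\infty)$. Feasible flows: $f\in\mathbb R_+^{\mathcal P}$ with $\sum_p f_p=M$; loads $x_e=\sum_{p\ni e}f_p$; path costs $c_p(f)=\sum_{e\in p}c_e(x_e)$. A Wardrop equilibrium is a feasible $f^*$ with $c_p(f^* )\le c_{p'}(f^* )$ whenever $f^*_p>0$. Social cost $L(x)=\sum_e x_ec_e(x_e)$; $\mathrm{Opt}$ is its minimum over feasible loads, $\mathrm{Eq}=L(x^* )$ at an equilibrium load, and $\mathrm{PoA}=\mathrm{Eq}/\mathrm{Opt}$; it is assumed that $\mathrm{Opt}>0$ (otherwise $\mathrm{PoA}:=1$). *)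

theory Defs
  imports "HOL-Analysis.Analysis"
begin

definition is_od_path ::
  "('e \<Rightarrow> 'v) \<Rightarrow> ('e \<Rightarrow> 'v) \<Rightarrow> 'e set \<Rightarrow> 'v \<Rightarrow> 'v \<Rightarrow> 'e list \<Rightarrow> bool" where
  "is_od_path src tgt E orig dest p \<longleftrightarrow>
     p \<noteq> [] \<and> set p \<subseteq> E \<and>
     src (hd p) = orig \<and> tgt (last p) = dest \<and>
     (\<forall>i. Suc i < length p \<longrightarrow> tgt (p ! i) = src (p ! Suc i)) \<and>
     distinct (src (hd p) # map tgt p)"

definition feasible :: "'e list set \<Rightarrow> real \<Rightarrow> ('e list \<Rightarrow> real) \<Rightarrow> bool" where
  "feasible P M f \<longleftrightarrow> (\<forall>p\<in>P. f p \<ge> 0) \<and> (\<Sum>p\<in>P. f p) = M"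

definition load :: "'e list set \<Rightarrow> ('e list \<Rightarrow> real) \<Rightarrow> 'e \<Rightarrow> real" where
  "load P f e = (\<Sum>p\<in>{p\<in>P. e \<in> set p}. f p)"

definition path_cost ::
  "('e \<Rightarrow> real \<Rightarrow> real) \<Rightarrow> 'e list set \<Rightarrow> ('e list \<Rightarrow> real) \<Rightarrow> 'e list \<Rightarrow> real" where
  "path_cost c P f p = (\<Sum>e\<in>set p. c e (load P f e))"

definition wardrop_eq ::
  "('e \<Rightarrow> real \<Rightarrow> real) \<Rightarrow> 'e list set \<Rightarrow> real \<Rightarrow> ('e list \<Rightarrow> real) \<Rightarrow> bool" where
  "wardrop_eq c P M f \<longleftrightarrow> feasible P M f \<and>
     (\<forall>p\<in>P. \<forall>p'\<in>P. f p > 0 \<longrightarrow> path_cost c P f p \<le> path_cost c P f p')"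

definition social_cost :: "'e set \<Rightarrow> ('e \<Rightarrow> real \<Rightarrow> real) \<Rightarrow> ('e \<Rightarrow> real) \<Rightarrow> real" where
  "social_cost E c x = (\<Sum>e\<in>E. x e * c e (x e))"

definition opt_cost ::
  "'e set \<Rightarrow> ('e \<Rightarrow> real \<Rightarrow> real) \<Rightarrow> 'e list set \<Rightarrow> real \<Rightarrow> real" where
  "opt_cost E c P M = Inf {social_cost E c (load P f) | f. feasible P M f}"

definition poa ::
  "'e set \<Rightarrow> ('e \<Rightarrow> real \<Rightarrow> real) \<Rightarrow> 'e list set \<Rightarrow> real \<Rightarrow> ('e list \<Rightarrow> real) \<Rightarrow> real" where
  "poa E c P M feq = (if opt_cost E c P M = 0 then 1
                      else social_cost E c (load P feq) / opt_cost E c P M)"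

end

(*
  Let d be the least exponent that every path has to pay, i.e. the minimum over paths of the
  largest exponent q_e on the path. Some path carries at least M/|P| and contains an edge with
  q_e >= d, so Opt grows at least like M^(d+1); a path whose exponents are all <= d shows that the
  equilibrium path cost is O(M^d). Compare the equilibrium x with a near-optimal flow y through
  the variational inequality Eq <= sum_e y_e c_e(x_e). Edges with q_e < d contribute
  O(M^(q_e+1)), and y puts only o(M) load on edges with q_e > d, so all these terms are
  o(M^(d+1)). On the remaining edges c_e(z) is asymptotically l_e z^d, and Young's inequality
  y x^d <= (d x^(d+1) + y^(d+1))/(d+1) gives (d+1) Eq <= d Eq + Opt up to lower-order terms,
  that is Eq <= (1 + o(1)) Opt.
*)

theory Submission
  imports Defs
begin

section \<open>Asymptotics of real functions\<close>

lemma eventually_powr_dominates: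
  assumes "0 < b" "s < r"
  shows "eventually (\<lambda>M::real. a * M powr s \<le> b * M powr r) at_top"
proof -
  have "((\<lambda>M. M powr (s - r)) \<longlongrightarrow> 0) at_top"
    using assms by (intro tendsto_neg_powr filterlim_ident) simp
  then have "((\<lambda>M. \<bar>a\<bar> * M powr (s - r)) \<longlongrightarrow> 0) at_top"
    by (rule tendsto_mult_right_zero)
  then have "eventually (\<lambda>M. \<bar>a\<bar> * M powr (s - r) < b) at_top"
    using assms(1) by (rule order_tendstoD(2))
  with eventually_gt_at_top[of 0] show ?thesis
  proof eventually_elim
    case (elim M)
    have "a * M powr s \<le> (\<bar>a\<bar> * M powr (s - r)) * M powr r"
      using elim by (simp add: mult.assoc mult_right_mono flip: powr_add)
    also have "\<dots> \<le> b * M powr r"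
      using elim by (intro mult_right_mono) auto
    finally show ?case .
  qed
qed

lemma eventually_ratio_bounds:
  fixes g :: "real \<Rightarrow> real"
  assumes lim: "((\<lambda>z. g z / z powr q) \<longlongrightarrow> l) at_top" and "0 < l" "0 < \<eta>"
  shows "eventually (\<lambda>z. (1 - \<eta>) * l * z powr q \<le> g z \<and> g z \<le> (1 + \<eta>) * l * z powr q) at_top"
proof -
  have "eventually (\<lambda>z. \<bar>g z / z powr q - l\<bar> < \<eta> * l) at_top"
    using tendstoD[OF lim, of "\<eta> * l"] assms by (simp add: dist_real_def)
  with eventually_gt_at_top[of 0] show ?thesis
  proof eventually_elim
    case (elim z)
    then have "(1 - \<eta>) * l \<le> g z / z powr q" "g z / z powr q \<le> (1 + \<eta>) * l"
      by (auto simp: algebra_simps)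
    with elim show ?case by (simp add: field_simps)
  qed
qed

lemma young_powr:
  fixes a b d :: real
  assumes "0 \<le> a" "0 \<le> b" "0 \<le> d"
  shows "(d + 1) * (b * a powr d) \<le> d * a powr (d + 1) + b powr (d + 1)"
proof (cases "d = 0")
  case False
  with assms have d: "0 < d" by simp
  have "b * a powr d \<le> b powr (d + 1) / (d + 1) + (a powr d) powr ((d + 1) / d) / ((d + 1) / d)"
    using d assms by (intro Youngs_inequality) (auto simp: field_simps)
  also have "(a powr d) powr ((d + 1) / d) = a powr (d + 1)"
    using d by (simp add: powr_powr)
  finally have "(d + 1) * (b * a powr d) \<le> (d + 1) * (b powr (d + 1) / (d + 1) + a powr (d + 1) / ((d + 1) / d))"
    using d by (intro mult_left_mono) auto
  also have "\<dots> = d * a powr (d + 1) + b powr (d + 1)"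
    using d by (simp add: distrib_left)
  finally show ?thesis .
qed (use assms in auto)

lemma eventually_sublinear_of_powr_bound:
  assumes "s < r" "0 \<le> s" "0 < \<theta>"
  shows "eventually (\<lambda>M::real. \<forall>z\<ge>0. z powr r \<le> B * M powr s \<longrightarrow> z \<le> \<theta> * M) at_top"
proof -
  have "eventually (\<lambda>M::real. B * M powr s \<le> (\<theta> powr r / 2) * M powr r) at_top"
    using assms by (intro eventually_powr_dominates) auto
  with eventually_gt_at_top[of 0] show ?thesis
  proof eventually_elim
    case (elim M)
    show ?case
    proof (intro allI impI)
      fix z :: real
      assume z: "0 \<le> z" "z powr r \<le> B * M powr s"
      show "z \<le> \<theta> * M"
      proof (rule ccontr)
        assume "\<not> z \<le> \<theta> * M"
        then have "(\<theta> * M) powr r < z powr r"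
          using elim assms by (intro powr_less_mono2) auto
        moreover have "(\<theta> * M) powr r = \<theta> powr r * M powr r"
          using elim assms by (simp add: powr_mult)
        moreover have "0 < \<theta> powr r * M powr r"
          using elim assms by simp
        ultimately show False
          using z elim by linarith
      qed
    qed
  qed
qed

lemma eventually_le_larger_powr:
  fixes g :: "real \<Rightarrow> real"
  assumes "((\<lambda>z. g z / z powr q) \<longlongrightarrow> l) at_top" "0 < l" "q \<le> r"
  shows "eventually (\<lambda>z. g z \<le> 2 * l * z powr r) at_top"
  using eventually_ratio_bounds[OF assms(1,2) zero_less_one] eventually_ge_at_top[of 1]
proof eventually_elim
  case (elim z)
  then have "g z \<le> 2 * l * z powr q" by simp
  also have "\<dots> \<le> 2 * l * z powr r"
    using elim assms by (intro mult_left_mono powr_mono) auto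
  finally show ?case .
qed

lemma eventually_ge_smaller_powr:
  fixes g :: "real \<Rightarrow> real"
  assumes "((\<lambda>z. g z / z powr q) \<longlongrightarrow> l) at_top" "0 < l" "0 \<le> q" "r \<le> q + 1" "0 < a"
  obtains k where "0 < k" "eventually (\<lambda>M. \<forall>z\<ge>a * M. k * M powr r \<le> z * g z) at_top"
proof
  show "0 < l / 2 * a powr (q + 1)"
    using assms by simp
  obtain Z where Z: "\<And>z. Z \<le> z \<Longrightarrow> l / 2 * z powr q \<le> g z"
    using eventually_ratio_bounds[OF assms(1,2), of "1/2"] by (auto simp: eventually_at_top_linorder)
  show "eventually (\<lambda>M. \<forall>z\<ge>a * M. l / 2 * a powr (q + 1) * M powr r \<le> z * g z) at_top"
    using eventually_ge_at_top[of "Z / a"] eventually_ge_at_top[of 1]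
  proof eventually_elim
    case (elim M)
    show ?case
    proof (intro allI impI)
      fix z assume z: "a * M \<le> z"
      have "0 \<le> a * M"
        using elim assms by simp
      with z have z0: "0 \<le> z" by linarith
      have "l / 2 * a powr (q + 1) * M powr r \<le> l / 2 * a powr (q + 1) * M powr (q + 1)"
        using elim assms by (intro mult_left_mono powr_mono) auto
      also have "\<dots> = l / 2 * (a * M) powr (q + 1)"
        using elim assms by (simp add: powr_mult)
      also have "\<dots> \<le> l / 2 * z powr (q + 1)"
        using elim assms z by (intro mult_left_mono powr_mono2) auto
      also have "\<dots> = z * (l / 2 * z powr q)"
        using z0 by (simp add: powr_add)
      also have "\<dots> \<le> z * g z"
        using elim assms z z0 Z[of z] by (intro mult_left_mono) (auto simp: field_simps)
      finally show "l / 2 * a powr (q + 1) * M powr r \<le> z * g z" .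
    qed
  qed
qed

lemma eventually_sublinear_of_cost_bound:
  fixes g :: "real \<Rightarrow> real"
  assumes "((\<lambda>z. g z / z powr q) \<longlongrightarrow> l) at_top" "0 < l" "s < q + 1" "0 \<le> s" "0 < \<theta>"
  shows "eventually (\<lambda>M. \<forall>z\<ge>0. z * g z \<le> B * M powr s \<longrightarrow> z \<le> \<theta> * M) at_top"
proof -
  obtain Z where Z: "\<And>z. Z \<le> z \<Longrightarrow> l / 2 * z powr q \<le> g z"
    using eventually_ratio_bounds[OF assms(1,2), of "1/2"] by (auto simp: eventually_at_top_linorder)
  have "eventually (\<lambda>M. \<forall>z\<ge>0. z powr (q + 1) \<le> 2 * B / l * M powr s \<longrightarrow> z \<le> \<theta> * M) at_top"
    using assms by (intro eventually_sublinear_of_powr_bound) auto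
  with eventually_ge_at_top[of "Z / \<theta>"] show ?thesis
  proof eventually_elim
    case (elim M)
    show ?case
    proof (intro allI impI)
      fix z :: real
      assume z: "0 \<le> z" "z * g z \<le> B * M powr s"
      show "z \<le> \<theta> * M"
      proof (cases "Z \<le> z")
        case True
        have "l / 2 * z powr (q + 1) = z * (l / 2 * z powr q)"
          using z by (simp add: powr_add)
        also have "\<dots> \<le> B * M powr s"
          using Z[OF True] z by (meson mult_left_mono order_trans)
        finally have "z powr (q + 1) \<le> 2 * B / l * M powr s"
          using assms by (simp add: field_simps)
        with elim z show ?thesis by blast
      next
        case False
        with elim assms show ?thesis
          by (simp add: field_simps)
      qed
    qed
  qed
qed

lemma powr_lower_bound_beyond_threshold:
  fixes g :: "real \<Rightarrow> real"
  assumes "\<And>z. Z \<le> z \<Longrightarrow> a * z powr d \<le> g z" "\<And>z. 0 \<le> z \<Longrightarrow> 0 \<le> g z"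
    and "0 \<le> a" "0 \<le> Z" "0 \<le> d" "0 \<le> z"
  shows "a * z powr (d + 1) \<le> z * g z + a * Z powr (d + 1)"
proof (cases "Z \<le> z")
  case True
  have "a * z powr (d + 1) = z * (a * z powr d)"
    using assms True by (simp add: powr_add)
  also have "\<dots> \<le> z * g z"
    using assms True by (intro mult_left_mono) auto
  finally show ?thesis
    using assms by (simp add: add_increasing2)
next
  case False
  then have "a * z powr (d + 1) \<le> a * Z powr (d + 1)"
    using assms by (intro mult_left_mono powr_mono2) auto
  then show ?thesis
    using assms by (simp add: add_increasing)
qed

lemma young_bound_beyond_threshold:
  fixes g :: "real \<Rightarrow> real"
  assumes mono: "mono_on {0..} g" and "\<And>z. Z \<le> z \<Longrightarrow> g z \<le> a * z powr d"
    and "0 \<le> a" "0 \<le> Z" "0 \<le> d" "0 \<le> x" "0 \<le> y"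
  shows "(d + 1) * (y * g x) \<le> a * (d * (x powr (d + 1) + Z powr (d + 1)) + y powr (d + 1))"
proof -
  define m where "m = max x Z"
  have "g x \<le> g m"
    using mono assms by (auto simp: m_def mono_on_def)
  also have "\<dots> \<le> a * m powr d"
    using assms by (simp add: m_def)
  finally have "(d + 1) * (y * g x) \<le> (d + 1) * (y * (a * m powr d))"
    using assms by (intro mult_left_mono) auto
  also have "\<dots> = a * ((d + 1) * (y * m powr d))"
    by (simp add: ac_simps)
  also have "\<dots> \<le> a * (d * m powr (d + 1) + y powr (d + 1))"
    using assms by (intro mult_left_mono young_powr) (auto simp: m_def)
  also have "m powr (d + 1) \<le> x powr (d + 1) + Z powr (d + 1)"
    by (simp add: m_def max_def)
  finally show ?thesis
    using assms by (simp add: mult_left_mono)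
qed

text \<open>For \<open>g z = l * z powr d\<close> this is Young's inequality with \<open>A = 0\<close>; in general \<open>A\<close> absorbs the
  bounded region where \<open>g\<close> is not yet close to \<open>l * z powr d\<close>.\<close>

lemma asymptotically_monomial_smoothness:
  fixes g :: "real \<Rightarrow> real"
  assumes mono: "mono_on {0..} g" and nonneg: "\<And>z. 0 \<le> z \<Longrightarrow> 0 \<le> g z"
    and lim: "((\<lambda>z. g z / z powr d) \<longlongrightarrow> l) at_top"
    and "0 < l" "0 \<le> d" "0 < \<eta>" "\<eta> \<le> 1"
  obtains A where "\<And>x y. 0 \<le> x \<Longrightarrow> 0 \<le> y \<Longrightarrow>
    (d + 1) * (1 - \<eta>) * (y * g x) \<le> (1 + \<eta>) * (d * (x * g x) + y * g y) + A"
proof -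
  obtain Z where "0 \<le> Z"
    and Z: "\<And>z. Z \<le> z \<Longrightarrow> (1 - \<eta>) * l * z powr d \<le> g z \<and> g z \<le> (1 + \<eta>) * l * z powr d"
    using eventually_conj[OF eventually_ratio_bounds[OF lim \<open>0 < l\<close> \<open>0 < \<eta>\<close>] eventually_ge_at_top[of 0]]
    by (auto simp: eventually_at_top_linorder)
  define L where "L = (1 - \<eta>) * l * Z powr (d + 1)"
  have "0 \<le> L"
    using assms by (simp add: L_def)
  have lower: "(1 - \<eta>) * l * z powr (d + 1) \<le> z * g z + L" if "0 \<le> z" for z
    unfolding L_def using Z nonneg assms \<open>0 \<le> Z\<close> that by (intro powr_lower_bound_beyond_threshold) auto
  show ?thesis
  proof (rule that[of "(1 + \<eta>) * (2 * d + 1) * L"])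
    fix x y :: real
    assume xy: "0 \<le> x" "0 \<le> y"
    have "(d + 1) * (1 - \<eta>) * (y * g x) = (1 - \<eta>) * ((d + 1) * (y * g x))"
      by (simp add: ac_simps)
    also have "\<dots> \<le> (1 - \<eta>) * ((1 + \<eta>) * l * (d * (x powr (d + 1) + Z powr (d + 1)) + y powr (d + 1)))"
      using Z assms xy \<open>0 \<le> Z\<close> by (intro mult_left_mono young_bound_beyond_threshold[OF mono]) auto
    also have "\<dots> = (1 + \<eta>) * (d * ((1 - \<eta>) * l * x powr (d + 1)) + (1 - \<eta>) * l * y powr (d + 1) + d * L)"
      by (simp add: L_def algebra_simps)
    also have "\<dots> \<le> (1 + \<eta>) * (d * (x * g x + L) + (y * g y + L) + d * L)"
      using lower xy assms by (intro mult_left_mono add_mono) auto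
    finally show "(d + 1) * (1 - \<eta>) * (y * g x) \<le> (1 + \<eta>) * (d * (x * g x) + y * g y) + (1 + \<eta>) * (2 * d + 1) * L"
      by (simp add: algebra_simps)
  qed
qed

lemma ratio_margin:
  fixes a b \<epsilon> :: real
  assumes "0 \<le> a" "0 \<le> b" "0 < \<epsilon>" "\<epsilon> \<le> 1"
  obtains \<eta> where "0 < \<eta>" "\<eta> \<le> 1" "0 < 1 - a * \<eta>" "1 + b * \<eta> < (1 + \<epsilon>) * (1 - a * \<eta>)"
proof
  define \<eta> where "\<eta> = \<epsilon> / (2 * (a + b + 1))"
  show \<eta>: "0 < \<eta>" "\<eta> \<le> 1"
    using assms by (auto simp: \<eta>_def field_simps)
  have small: "(2 * a + b) * \<eta> < \<epsilon>"
    using assms by (simp add: \<eta>_def field_simps add_nonneg_pos)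
  have "a * \<eta> \<le> (2 * a + b) * \<eta>"
    using assms \<eta> by (intro mult_right_mono) auto
  with small assms show "0 < 1 - a * \<eta>"
    by linarith
  have "\<epsilon> * \<eta> \<le> \<eta>"
    using \<eta> assms by (simp add: mult_left_le_one_le)
  then have "a * (\<epsilon> * \<eta>) \<le> a * \<eta>"
    using assms(1) by (rule mult_left_mono)
  with small show "1 + b * \<eta> < (1 + \<epsilon>) * (1 - a * \<eta>)"
    by (simp add: algebra_simps)
qed

lemma tendsto_ratio_one:
  fixes f g :: "'a \<Rightarrow> real"
  assumes "0 \<le> a" "0 \<le> b"
    and lower: "eventually (\<lambda>x. g x \<le> f x) F"
    and upper: "\<And>\<eta>. 0 < \<eta> \<Longrightarrow> \<eta> \<le> 1 \<Longrightarrow>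
      eventually (\<lambda>x. 0 < g x \<and> (1 - a * \<eta>) * f x \<le> (1 + b * \<eta>) * g x) F"
  shows "((\<lambda>x. f x / g x) \<longlongrightarrow> 1) F"
proof (rule tendstoI)
  fix \<epsilon> :: real
  assume "0 < \<epsilon>"
  then obtain \<eta> where \<eta>: "0 < \<eta>" "\<eta> \<le> 1" "0 < 1 - a * \<eta>"
    and margin: "1 + b * \<eta> < (1 + min \<epsilon> 1) * (1 - a * \<eta>)"
    using ratio_margin[OF assms(1,2), of "min \<epsilon> 1"] by auto
  from lower upper[OF \<eta>(1,2)] show "eventually (\<lambda>x. dist (f x / g x) 1 < \<epsilon>) F"
  proof eventually_elim
    case (elim x)
    then have "(1 - a * \<eta>) * f x < (1 - a * \<eta>) * ((1 + min \<epsilon> 1) * g x)"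
      using mult_strict_right_mono[OF margin, of "g x"] by (simp add: algebra_simps)
    then have "f x < (1 + min \<epsilon> 1) * g x"
      using \<eta>(3) by simp
    with elim have "1 \<le> f x / g x" "f x / g x < 1 + min \<epsilon> 1"
      by (simp_all add: field_simps)
    then show ?case
      by (simp add: dist_real_def)
  qed
qed

lemma tendsto_ratio_limit_pos:
  fixes g :: "real \<Rightarrow> real"
  assumes "((\<lambda>z. g z / z powr q) \<longlongrightarrow> l) at_top" "l \<noteq> 0" "\<And>z. 0 \<le> z \<Longrightarrow> 0 \<le> g z"
  shows "0 < l"
proof -
  have "eventually (\<lambda>z. 0 \<le> g z / z powr q) at_top"
    using eventually_ge_at_top[of 0] by eventually_elim (simp add: assms(3))
  with assms(1) have "0 \<le> l"
    by (intro tendsto_lowerbound[OF _ _ trivial_limit_at_top_linorder])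
  with assms(2) show ?thesis
    by simp
qed

lemma eventually_uniform_pos_constant:
  fixes Q :: "'e \<Rightarrow> real \<Rightarrow> 'a \<Rightarrow> bool"
  assumes "finite H"
    and mono: "\<And>e k k' x. 0 < k' \<Longrightarrow> k' \<le> k \<Longrightarrow> Q e k x \<Longrightarrow> Q e k' x"
    and "\<And>e. e \<in> H \<Longrightarrow> \<exists>k>0. eventually (Q e k) F"
  shows "\<exists>k>0. eventually (\<lambda>x. \<forall>e\<in>H. Q e k x) F"
  using assms(1,3)
proof (induction H rule: finite_induct)
  case empty
  show ?case
    by (auto intro: exI[of _ 1])
next
  case (insert e H)
  then obtain k1 k2 where "0 < k1" "eventually (\<lambda>x. \<forall>e\<in>H. Q e k1 x) F"
    and "0 < k2" "eventually (Q e k2) F"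
    by blast
  from this(2,4) have "eventually (\<lambda>x. \<forall>e'\<in>insert e H. Q e' (min k1 k2) x) F"
  proof eventually_elim
    case (elim x)
    with \<open>0 < k1\<close> \<open>0 < k2\<close> show ?case
      by (auto intro: mono[of "min k1 k2" k1] mono[of "min k1 k2" k2])
  qed
  with \<open>0 < k1\<close> \<open>0 < k2\<close> show ?case
    by (intro exI[of _ "min k1 k2"]) simp
qed

section \<open>Nonatomic routing games\<close>

locale routing_game =
  fixes E :: "'e set" and P :: "'e list set" and c :: "'e \<Rightarrow> real \<Rightarrow> real"
  assumes finite_edges: "finite E"
    and finite_paths: "finite P"
    and P_not_empty: "P \<noteq> {}"
    and path_edges: "p \<in> P \<Longrightarrow> set p \<subseteq> E"
    and cost_nonneg: "e \<in> E \<Longrightarrow> 0 \<le> x \<Longrightarrow> 0 \<le> c e x"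
    and cost_mono: "e \<in> E \<Longrightarrow> mono_on {0..} (c e)"
begin

lemma cost_monoD: "e \<in> E \<Longrightarrow> 0 \<le> a \<Longrightarrow> a \<le> b \<Longrightarrow> c e a \<le> c e b"
  using cost_mono by (auto simp: mono_on_def)

lemma load_nonneg: "feasible P M f \<Longrightarrow> 0 \<le> load P f e"
  unfolding load_def feasible_def by (auto intro: sum_nonneg)

lemma load_le_demand:
  assumes "feasible P M f"
  shows "load P f e \<le> M"
proof -
  have "load P f e \<le> (\<Sum>p\<in>P. f p)"
    unfolding load_def using assms finite_paths by (intro sum_mono2) (auto simp: feasible_def)
  with assms show ?thesis by (simp add: feasible_def)
qed

lemma flow_le_load: "feasible P M f \<Longrightarrow> p \<in> P \<Longrightarrow> e \<in> set p \<Longrightarrow> f p \<le> load P f e"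
  unfolding load_def feasible_def using finite_paths by (intro member_le_sum) auto

lemma sum_load_mult: "(\<Sum>e\<in>E. load P f e * h e) = (\<Sum>p\<in>P. f p * (\<Sum>e\<in>set p. h e))"
proof -
  have "(\<Sum>e\<in>E. load P f e * h e) = (\<Sum>e\<in>E. \<Sum>p\<in>{p. p \<in> P \<and> e \<in> set p}. f p * h e)"
    by (simp add: load_def sum_distrib_right)
  also have "\<dots> = (\<Sum>p\<in>P. \<Sum>e\<in>{e. e \<in> E \<and> e \<in> set p}. f p * h e)"
    using finite_edges finite_paths by (rule sum.swap_restrict)
  also have "\<dots> = (\<Sum>p\<in>P. f p * (\<Sum>e\<in>set p. h e))"
    using path_edges by (intro sum.cong) (auto simp: sum_distrib_left Int_absorb1 Collect_conj_eq)
  finally show ?thesis .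
qed

lemma social_cost_path_sum: "social_cost E c (load P f) = (\<Sum>p\<in>P. f p * path_cost c P f p)"
  unfolding social_cost_def path_cost_def by (rule sum_load_mult)

lemma partial_social_cost_le:
  "feasible P M f \<Longrightarrow> D \<subseteq> E \<Longrightarrow> (\<Sum>e\<in>D. load P f e * c e (load P f e)) \<le> social_cost E c (load P f)"
  unfolding social_cost_def using finite_edges load_nonneg cost_nonneg
  by (intro sum_mono2) auto

lemma social_cost_nonneg: "feasible P M f \<Longrightarrow> 0 \<le> social_cost E c (load P f)"
  using partial_social_cost_le[of M f "{}"] by simp

lemma opt_cost_le: "feasible P M f \<Longrightarrow> opt_cost E c P M \<le> social_cost E c (load P f)"
  unfolding opt_cost_def using social_cost_nonneg
  by (intro cInf_lower bdd_belowI[where m = 0]) auto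

lemma feasible_uniform: "0 \<le> M \<Longrightarrow> feasible P M (\<lambda>p. M / card P)"
  using finite_paths P_not_empty by (simp add: feasible_def)

lemma feasible_heavy_path:
  assumes "feasible P M f"
  obtains p where "p \<in> P" "M / card P \<le> f p"
proof -
  have "\<exists>p\<in>P. M / card P \<le> f p"
  proof (rule ccontr)
    assume "\<not> ?thesis"
    then have "(\<Sum>p\<in>P. f p) < (\<Sum>p\<in>P. M / card P)"
      using finite_paths P_not_empty by (intro sum_strict_mono) (auto simp: not_le)
    with assms finite_paths P_not_empty show False
      by (simp add: feasible_def)
  qed
  with that show ?thesis by blast
qed

lemma opt_cost_greatest:
  "0 \<le> M \<Longrightarrow> (\<And>f. feasible P M f \<Longrightarrow> b \<le> social_cost E c (load P f)) \<Longrightarrow> b \<le> opt_cost E c P M"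
  unfolding opt_cost_def using feasible_uniform by (intro cInf_greatest) auto

lemma near_optimal_flow:
  assumes "0 \<le> M" "0 < \<epsilon>"
  obtains g where "feasible P M g" "social_cost E c (load P g) < opt_cost E c P M + \<epsilon>"
proof -
  let ?S = "{social_cost E c (load P f) | f. feasible P M f}"
  have "?S \<noteq> {}"
    using feasible_uniform[OF assms(1)] by blast
  moreover have "Inf ?S < opt_cost E c P M + \<epsilon>"
    using assms by (simp add: opt_cost_def)
  ultimately obtain v where "v \<in> ?S" "v < opt_cost E c P M + \<epsilon>"
    by (rule cInf_lessD[elim_format]) blast
  then show ?thesis
    using that by blast
qed

definition min_path_cost :: "('e list \<Rightarrow> real) \<Rightarrow> real" where
  "min_path_cost f = (MIN p\<in>P. path_cost c P f p)"

lemma min_path_cost_le: "p \<in> P \<Longrightarrow> min_path_cost f \<le> path_cost c P f p"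
  unfolding min_path_cost_def using finite_paths by simp

lemma min_path_cost_le_demand_cost:
  assumes "feasible P M f" "p \<in> P"
  shows "min_path_cost f \<le> (\<Sum>e\<in>set p. c e M)"
proof -
  have "min_path_cost f \<le> (\<Sum>e\<in>set p. c e (load P f e))"
    using min_path_cost_le[OF assms(2)] by (simp add: path_cost_def)
  also have "\<dots> \<le> (\<Sum>e\<in>set p. c e M)"
    using assms path_edges load_nonneg load_le_demand by (intro sum_mono cost_monoD) auto
  finally show ?thesis .
qed

lemma wardrop_used_path_cost:
  assumes "wardrop_eq c P M f" "p \<in> P" "0 < f p"
  shows "path_cost c P f p = min_path_cost f"
proof -
  have "path_cost c P f p \<le> min_path_cost f"
    using assms finite_paths P_not_empty unfolding wardrop_eq_def min_path_cost_def by simp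
  with min_path_cost_le[OF assms(2), of f] show ?thesis by simp
qed

lemma wardrop_social_cost:
  assumes "wardrop_eq c P M f"
  shows "social_cost E c (load P f) = M * min_path_cost f"
proof -
  have f: "feasible P M f"
    using assms by (simp add: wardrop_eq_def)
  have "social_cost E c (load P f) = (\<Sum>p\<in>P. f p * path_cost c P f p)"
    by (rule social_cost_path_sum)
  also have "\<dots> = (\<Sum>p\<in>P. f p * min_path_cost f)"
  proof (rule sum.cong)
    fix p assume p: "p \<in> P"
    show "f p * path_cost c P f p = f p * min_path_cost f"
    proof (cases "f p = 0")
      case False
      moreover have "0 \<le> f p"
        using f p by (simp add: feasible_def)
      ultimately have "0 < f p" by simp
      with wardrop_used_path_cost[OF assms p] show ?thesis by simp
    qed simp
  qed simp
  also have "\<dots> = M * min_path_cost f"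
    using f by (simp add: feasible_def sum_distrib_right[symmetric])
  finally show ?thesis .
qed

lemma wardrop_variational_inequality:
  assumes "wardrop_eq c P M f" "feasible P M g"
  shows "social_cost E c (load P f) \<le> (\<Sum>e\<in>E. load P g e * c e (load P f e))"
proof -
  have "social_cost E c (load P f) = (\<Sum>p\<in>P. g p * min_path_cost f)"
    using assms by (simp add: wardrop_social_cost feasible_def sum_distrib_right[symmetric])
  also have "\<dots> \<le> (\<Sum>p\<in>P. g p * path_cost c P f p)"
    using assms(2) min_path_cost_le by (intro sum_mono mult_left_mono) (auto simp: feasible_def)
  also have "\<dots> = (\<Sum>e\<in>E. load P g e * c e (load P f e))"
    by (simp add: sum_load_mult path_cost_def)
  finally show ?thesis .
qed

lemma wardrop_edge_cost_le:
  assumes "wardrop_eq c P M f" "0 < load P f e"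
  shows "c e (load P f e) \<le> min_path_cost f"
proof -
  have "\<exists>p\<in>P. e \<in> set p \<and> 0 < f p"
  proof (rule ccontr)
    assume "\<not> ?thesis"
    then have "load P f e \<le> 0"
      unfolding load_def by (intro sum_nonpos) (auto simp: not_less)
    with assms(2) show False by simp
  qed
  then obtain p where p: "p \<in> P" "e \<in> set p" "0 < f p"
    by blast
  have f: "feasible P M f"
    using assms(1) by (simp add: wardrop_eq_def)
  have "c e (load P f e) \<le> path_cost c P f p"
    unfolding path_cost_def using p path_edges[OF p(1)] load_nonneg[OF f]
    by (intro member_le_sum cost_nonneg) auto
  with wardrop_used_path_cost[OF assms(1) p(1,3)] show ?thesis by simp
qed

lemma wardrop_edge_cost_le_max:
  assumes "wardrop_eq c P M f" "e \<in> E"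
  shows "c e (load P f e) \<le> max (min_path_cost f) (c e 0)"
proof (cases "0 < load P f e")
  case False
  with assms load_nonneg[of M f e] have "load P f e = 0"
    by (simp add: wardrop_eq_def)
  then show ?thesis by simp
next
  case True
  with wardrop_edge_cost_le[OF assms(1) True] show ?thesis
    by (simp add: le_max_iff_disj)
qed

end

section \<open>Costs of polynomial growth\<close>

locale asymptotic_routing_game = routing_game E P c
  for E :: "'e set" and P :: "'e list set" and c :: "'e \<Rightarrow> real \<Rightarrow> real" +
  fixes q l :: "'e \<Rightarrow> real" and feq :: "real \<Rightarrow> 'e list \<Rightarrow> real"
  assumes nonempty_paths: "p \<in> P \<Longrightarrow> p \<noteq> []"
    and exponent_nonneg: "e \<in> E \<Longrightarrow> 0 \<le> q e"
    and coeff_pos: "e \<in> E \<Longrightarrow> 0 < l e"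
    and cost_asymp: "e \<in> E \<Longrightarrow> ((\<lambda>z. c e z / z powr q e) \<longlongrightarrow> l e) at_top"
    and equilibrium: "0 < M \<Longrightarrow> wardrop_eq c P M (feq M)"
begin

abbreviation eq_load :: "real \<Rightarrow> 'e \<Rightarrow> real" where
  "eq_load M \<equiv> load P (feq M)"

abbreviation eq_cost :: "real \<Rightarrow> real" where
  "eq_cost M \<equiv> social_cost E c (eq_load M)"

abbreviation cross_cost :: "real \<Rightarrow> ('e list \<Rightarrow> real) \<Rightarrow> 'e \<Rightarrow> real" where
  "cross_cost M g e \<equiv> load P g e * c e (eq_load M e)"

text \<open>Near-optimal flows are competitive, since \<open>Opt \<le> Eq\<close>.\<close>

abbreviation competitive_flow :: "real \<Rightarrow> ('e list \<Rightarrow> real) \<Rightarrow> bool" where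
  "competitive_flow M g \<equiv> feasible P M g \<and> social_cost E c (load P g) \<le> eq_cost M + 1"

lemma equilibrium_feasible: "0 < M \<Longrightarrow> feasible P M (feq M)"
  using equilibrium by (simp add: wardrop_eq_def)

lemma opt_cost_le_eq_cost: "0 < M \<Longrightarrow> opt_cost E c P M \<le> eq_cost M"
  using equilibrium_feasible by (rule opt_cost_le)

definition cost_degree :: real where
  "cost_degree = (MIN p\<in>P. MAX e\<in>set p. q e)"

lemma cost_degree_attained:
  obtains p where "p \<in> P" "\<And>e. e \<in> set p \<Longrightarrow> q e \<le> cost_degree"
proof -
  obtain p where p: "p \<in> P" "cost_degree = (MAX e\<in>set p. q e)"
    unfolding cost_degree_def using finite_paths P_not_empty
    by (metis (no_types, lifting) Min_in finite_imageI imageE image_is_empty)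
  moreover have "q e \<le> cost_degree" if "e \<in> set p" for e
    using p that by simp
  ultimately show ?thesis
    using that by blast
qed

lemma cost_degree_le_path_exponent:
  assumes "p \<in> P"
  obtains e where "e \<in> set p" "cost_degree \<le> q e"
proof -
  have "cost_degree \<le> (MAX e\<in>set p. q e)"
    unfolding cost_degree_def using finite_paths assms by simp
  moreover have "(MAX e\<in>set p. q e) \<in> q ` set p"
    using nonempty_paths[OF assms] by simp
  ultimately show ?thesis
    using that by auto
qed

lemma cost_degree_nonneg: "0 \<le> cost_degree"
proof -
  obtain p where p: "p \<in> P" "\<And>e. e \<in> set p \<Longrightarrow> q e \<le> cost_degree"
    using cost_degree_attained by blast
  obtain e where "e \<in> set p" "cost_degree \<le> q e"
    using cost_degree_le_path_exponent[OF p(1)] .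
  with p path_edges exponent_nonneg show ?thesis
    by force
qed

lemma min_path_cost_growth:
  obtains K where "eventually (\<lambda>M. min_path_cost (feq M) \<le> K * M powr cost_degree) at_top"
proof -
  obtain p where p: "p \<in> P" "\<And>e. e \<in> set p \<Longrightarrow> q e \<le> cost_degree"
    using cost_degree_attained by blast
  have "\<forall>e\<in>set p. eventually (\<lambda>M. c e M \<le> 2 * l e * M powr cost_degree) at_top"
    using p path_edges by (auto intro!: eventually_le_larger_powr cost_asymp coeff_pos)
  then have "eventually (\<lambda>M. \<forall>e\<in>set p. c e M \<le> 2 * l e * M powr cost_degree) at_top"
    by (simp add: eventually_ball_finite)
  with eventually_gt_at_top[of 0]
  have "eventually (\<lambda>M. min_path_cost (feq M) \<le> (\<Sum>e\<in>set p. 2 * l e) * M powr cost_degree) at_top"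
  proof eventually_elim
    case (elim M)
    have "min_path_cost (feq M) \<le> (\<Sum>e\<in>set p. c e M)"
      using equilibrium_feasible[OF elim(1)] p(1) by (rule min_path_cost_le_demand_cost)
    also have "\<dots> \<le> (\<Sum>e\<in>set p. 2 * l e * M powr cost_degree)"
      using elim(2) by (intro sum_mono) simp
    finally show ?case
      by (simp add: sum_distrib_right)
  qed
  then show ?thesis
    using that by blast
qed

lemma eq_cost_growth:
  obtains K where "eventually (\<lambda>M. eq_cost M \<le> K * M powr (cost_degree + 1)) at_top"
proof -
  obtain K where K: "eventually (\<lambda>M. min_path_cost (feq M) \<le> K * M powr cost_degree) at_top"
    by (rule min_path_cost_growth)
  have "eventually (\<lambda>M. eq_cost M \<le> K * M powr (cost_degree + 1)) at_top"
    using K eventually_gt_at_top[of 0]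
  proof eventually_elim
    case (elim M)
    then show ?case
      using wardrop_social_cost[OF equilibrium] mult_left_mono[OF elim(1), of M]
      by (simp add: powr_add mult_ac)
  qed
  then show ?thesis
    using that by blast
qed

lemma eq_edge_cost_growth:
  obtains K where "0 \<le> K" "eventually (\<lambda>M. \<forall>e\<in>E. c e (eq_load M e) \<le> K * M powr cost_degree) at_top"
proof -
  obtain K0 where K0: "eventually (\<lambda>M. min_path_cost (feq M) \<le> K0 * M powr cost_degree) at_top"
    by (rule min_path_cost_growth)
  define C0 where "C0 = (\<Sum>e\<in>E. c e 0)"
  define K where "K = \<bar>K0\<bar> + C0"
  have "0 \<le> C0"
    unfolding C0_def using cost_nonneg by (simp add: sum_nonneg)
  have "eventually (\<lambda>M. \<forall>e\<in>E. c e (eq_load M e) \<le> K * M powr cost_degree) at_top"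
    using K0 eventually_ge_at_top[of 1]
  proof eventually_elim
    case (elim M)
    have "1 \<le> M powr cost_degree"
      using elim cost_degree_nonneg by (simp add: ge_one_powr_ge_zero)
    moreover have "K0 * M powr cost_degree \<le> \<bar>K0\<bar> * M powr cost_degree"
      by (simp add: mult_right_mono)
    ultimately have "K0 * M powr cost_degree \<le> K * M powr cost_degree"
      and C0: "C0 \<le> K * M powr cost_degree"
      using \<open>0 \<le> C0\<close> mult_le_cancel_left1[of C0 "M powr cost_degree"] abs_ge_zero[of K0]
      by (auto simp: K_def distrib_right intro: add_increasing)
    with elim(1) have min: "min_path_cost (feq M) \<le> K * M powr cost_degree"
      by linarith
    show ?case
    proof
      fix e assume "e \<in> E"
      then have "c e 0 \<le> C0"
        unfolding C0_def using finite_edges cost_nonneg by (intro member_le_sum) auto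
      moreover have "0 < M"
        using elim by simp
      ultimately show "c e (eq_load M e) \<le> K * M powr cost_degree"
        using wardrop_edge_cost_le_max[OF equilibrium \<open>e \<in> E\<close>] min C0 by (meson max.boundedI order_trans)
    qed
  qed
  moreover have "0 \<le> K"
    using \<open>0 \<le> C0\<close> by (simp add: K_def)
  ultimately show ?thesis
    using that by blast
qed

lemma heavy_edge_cost_growth:
  obtains k where "0 < k" "eventually (\<lambda>M. \<forall>e\<in>{e\<in>E. cost_degree \<le> q e}. \<forall>z\<ge>1 / card P * M.
    k * M powr (cost_degree + 1) \<le> z * c e z) at_top"
proof -
  have "0 < 1 / real (card P)"
    using finite_paths P_not_empty by (simp add: card_gt_0_iff)
  have "\<exists>k>0. eventually (\<lambda>M. \<forall>e\<in>{e\<in>E. cost_degree \<le> q e}. \<forall>z\<ge>1 / card P * M.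
    k * M powr (cost_degree + 1) \<le> z * c e z) at_top"
  proof (rule eventually_uniform_pos_constant)
    show "finite {e\<in>E. cost_degree \<le> q e}"
      using finite_edges by simp
    show "\<forall>z\<ge>1 / card P * M. k' * M powr (cost_degree + 1) \<le> z * c e z"
      if "0 < k'" "k' \<le> k" "\<forall>z\<ge>1 / card P * M. k * M powr (cost_degree + 1) \<le> z * c e z" for e k k' M
      using that by (meson mult_right_mono order_trans powr_ge_zero)
    fix e assume "e \<in> {e\<in>E. cost_degree \<le> q e}"
    then have "e \<in> E" "cost_degree + 1 \<le> q e + 1"
      by auto
    from eventually_ge_smaller_powr[OF cost_asymp[OF \<open>e \<in> E\<close>] coeff_pos[OF \<open>e \<in> E\<close>]
        exponent_nonneg[OF \<open>e \<in> E\<close>] this(2) \<open>0 < 1 / real (card P)\<close>]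
    show "\<exists>k>0. eventually (\<lambda>M. \<forall>z\<ge>1 / card P * M. k * M powr (cost_degree + 1) \<le> z * c e z) at_top"
      by blast
  qed
  then show ?thesis
    using that by blast
qed

lemma opt_cost_growth:
  obtains k where "0 < k" "eventually (\<lambda>M. k * M powr (cost_degree + 1) \<le> opt_cost E c P M) at_top"
proof -
  obtain k where "0 < k" and k: "eventually (\<lambda>M. \<forall>e\<in>{e\<in>E. cost_degree \<le> q e}. \<forall>z\<ge>1 / card P * M.
      k * M powr (cost_degree + 1) \<le> z * c e z) at_top"
    by (rule heavy_edge_cost_growth)
  have "eventually (\<lambda>M. k * M powr (cost_degree + 1) \<le> opt_cost E c P M) at_top"
    using k eventually_gt_at_top[of 0]
  proof eventually_elim
    case (elim M)
    show ?case
    proof (rule opt_cost_greatest)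
      fix g assume g: "feasible P M g"
      obtain p where p: "p \<in> P" "M / card P \<le> g p"
        using feasible_heavy_path[OF g] .
      obtain e where e: "e \<in> set p" "cost_degree \<le> q e"
        using cost_degree_le_path_exponent[OF p(1)] .
      with p(1) have "e \<in> E"
        using path_edges by auto
      have "k * M powr (cost_degree + 1) \<le> load P g e * c e (load P g e)"
        using elim(1) \<open>e \<in> E\<close> e(2) p(2) flow_le_load[OF g p(1) e(1)] by simp
      also have "\<dots> \<le> social_cost E c (load P g)"
        using partial_social_cost_le[OF g, of "{e}"] \<open>e \<in> E\<close> by simp
      finally show "k * M powr (cost_degree + 1) \<le> social_cost E c (load P g)" .
    qed (use elim in simp)
  qed
  with \<open>0 < k\<close> show ?thesis
    using that by blast
qed

lemma cheap_edge_negligible: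
  assumes "e \<in> E" "q e < cost_degree" "0 < \<delta>"
  shows "eventually (\<lambda>M. \<forall>g. feasible P M g \<longrightarrow> cross_cost M g e \<le> \<delta> * M powr (cost_degree + 1)) at_top"
proof -
  have "eventually (\<lambda>M. 2 * l e * M powr (q e + 1) \<le> \<delta> * M powr (cost_degree + 1)) at_top"
    using assms by (intro eventually_powr_dominates) auto
  with eventually_le_larger_powr[OF cost_asymp[OF \<open>e \<in> E\<close>] coeff_pos[OF \<open>e \<in> E\<close>] order.refl]
    eventually_gt_at_top[of 0]
  show ?thesis
  proof eventually_elim
    case (elim M)
    show ?case
    proof (intro allI impI)
      fix g assume g: "feasible P M g"
      have f: "feasible P M (feq M)"
        using equilibrium_feasible elim by simp
      have "cross_cost M g e \<le> M * c e M"
        using load_nonneg load_le_demand g f \<open>e \<in> E\<close> elim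
        by (intro mult_mono cost_monoD cost_nonneg) auto
      also have "\<dots> \<le> M * (2 * l e * M powr q e)"
        using elim by (intro mult_left_mono) auto
      also have "\<dots> = 2 * l e * M powr (q e + 1)"
        using elim by (simp add: powr_add)
      also have "\<dots> \<le> \<delta> * M powr (cost_degree + 1)"
        using elim by simp
      finally show "cross_cost M g e \<le> \<delta> * M powr (cost_degree + 1)" .
    qed
  qed
qed

lemma expensive_edge_light_load:
  assumes "e \<in> E" "cost_degree < q e" "0 < \<theta>"
  shows "eventually (\<lambda>M. \<forall>g. competitive_flow M g \<longrightarrow> load P g e \<le> \<theta> * M) at_top"
proof -
  obtain K where K: "eventually (\<lambda>M. eq_cost M \<le> K * M powr (cost_degree + 1)) at_top"
    by (rule eq_cost_growth)
  have "eventually (\<lambda>M. \<forall>z\<ge>0. z * c e z \<le> (\<bar>K\<bar> + 1) * M powr (cost_degree + 1) \<longrightarrow> z \<le> \<theta> * M) at_top"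
    using assms cost_degree_nonneg
    by (intro eventually_sublinear_of_cost_bound[OF cost_asymp coeff_pos]) auto
  with K eventually_ge_at_top[of 1] show ?thesis
  proof eventually_elim
    case (elim M)
    show ?case
    proof (intro allI impI)
      fix g assume g: "competitive_flow M g"
      have "load P g e * c e (load P g e) \<le> social_cost E c (load P g)"
        using partial_social_cost_le[of M g "{e}"] g \<open>e \<in> E\<close> by simp
      also have "\<dots> \<le> K * M powr (cost_degree + 1) + 1"
        using g elim by simp
      also have "\<dots> \<le> (\<bar>K\<bar> + 1) * M powr (cost_degree + 1)"
        using elim cost_degree_nonneg abs_ge_self[of K]
        by (simp add: distrib_right ge_one_powr_ge_zero mult_right_mono add_mono)
      finally show "load P g e \<le> \<theta> * M"
        using elim load_nonneg g by blast
    qed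
  qed
qed

lemma expensive_edge_negligible:
  assumes "e \<in> E" "cost_degree < q e" "0 < \<delta>"
  shows "eventually (\<lambda>M. \<forall>g. competitive_flow M g \<longrightarrow> cross_cost M g e \<le> \<delta> * M powr (cost_degree + 1)) at_top"
proof -
  obtain K where "0 \<le> K"
    and K: "eventually (\<lambda>M. \<forall>e\<in>E. c e (eq_load M e) \<le> K * M powr cost_degree) at_top"
    by (rule eq_edge_cost_growth)
  have "0 < \<delta> / (K + 1)"
    using assms \<open>0 \<le> K\<close> by simp
  from expensive_edge_light_load[OF assms(1,2) this] K eventually_gt_at_top[of 0]
  show ?thesis
  proof eventually_elim
    case (elim M)
    show ?case
    proof (intro allI impI)
      fix g assume g: "competitive_flow M g"
      have "cross_cost M g e \<le> (\<delta> / (K + 1) * M) * (K * M powr cost_degree)"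
        using elim g assms \<open>0 \<le> K\<close> load_nonneg
          cost_nonneg[OF \<open>e \<in> E\<close> load_nonneg[OF equilibrium_feasible]]
        by (intro mult_mono) auto
      also have "\<dots> = \<delta> * (K / (K + 1)) * M powr (cost_degree + 1)"
        using elim by (simp add: powr_add)
      also have "\<dots> \<le> \<delta> * M powr (cost_degree + 1)"
        using assms \<open>0 \<le> K\<close> by (intro mult_right_mono mult_left_le) auto
      finally show "cross_cost M g e \<le> \<delta> * M powr (cost_degree + 1)" .
    qed
  qed
qed

lemma nondominant_edges_negligible:
  assumes "0 < \<delta>"
  shows "eventually (\<lambda>M. \<forall>g. competitive_flow M g \<longrightarrow>
    (\<Sum>e\<in>{e\<in>E. q e \<noteq> cost_degree}. cross_cost M g e) \<le> \<delta> * M powr (cost_degree + 1)) at_top"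
proof -
  define N where "N = {e\<in>E. q e \<noteq> cost_degree}"
  define \<delta>' where "\<delta>' = \<delta> / (card N + 1)"
  have "0 < \<delta>'"
    using assms by (simp add: \<delta>'_def)
  have "\<forall>e\<in>N. eventually (\<lambda>M. \<forall>g. competitive_flow M g \<longrightarrow> cross_cost M g e \<le> \<delta>' * M powr (cost_degree + 1)) at_top"
  proof
    fix e assume "e \<in> N"
    then consider "e \<in> E" "q e < cost_degree" | "e \<in> E" "cost_degree < q e"
      by (force simp: N_def)
    then show "eventually (\<lambda>M. \<forall>g. competitive_flow M g \<longrightarrow> cross_cost M g e \<le> \<delta>' * M powr (cost_degree + 1)) at_top"
      using cheap_edge_negligible expensive_edge_negligible \<open>0 < \<delta>'\<close>
      by cases (fastforce elim: eventually_mono)+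
  qed
  then have "eventually (\<lambda>M. \<forall>e\<in>N. \<forall>g. competitive_flow M g \<longrightarrow> cross_cost M g e \<le> \<delta>' * M powr (cost_degree + 1)) at_top"
    using finite_edges by (intro eventually_ball_finite) (simp_all add: N_def)
  then show ?thesis
    unfolding N_def[symmetric]
  proof (rule eventually_mono, intro allI impI)
    fix M g
    assume "\<forall>e\<in>N. \<forall>g. competitive_flow M g \<longrightarrow> cross_cost M g e \<le> \<delta>' * M powr (cost_degree + 1)"
      and "competitive_flow M g"
    then have "(\<Sum>e\<in>N. cross_cost M g e) \<le> card N * (\<delta>' * M powr (cost_degree + 1))"
      by (intro sum_bounded_above) auto
    also have "\<dots> = card N / (card N + 1) * \<delta> * M powr (cost_degree + 1)"
      by (simp add: \<delta>'_def)
    also have "\<dots> \<le> \<delta> * M powr (cost_degree + 1)"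
      using assms by (intro mult_right_mono mult_left_le_one_le) auto
    finally show "(\<Sum>e\<in>N. cross_cost M g e) \<le> \<delta> * M powr (cost_degree + 1)" .
  qed
qed

lemma dominant_edge_smoothness:
  assumes "e \<in> E" "q e = cost_degree" "0 < \<eta>" "\<eta> \<le> 1"
  shows "\<exists>A. \<forall>x\<ge>0. \<forall>y\<ge>0. (cost_degree + 1) * (1 - \<eta>) * (y * c e x)
    \<le> (1 + \<eta>) * (cost_degree * (x * c e x) + y * c e y) + A"
proof -
  obtain A where "\<And>x y. 0 \<le> x \<Longrightarrow> 0 \<le> y \<Longrightarrow> (cost_degree + 1) * (1 - \<eta>) * (y * c e x)
      \<le> (1 + \<eta>) * (cost_degree * (x * c e x) + y * c e y) + A"
    using asymptotically_monomial_smoothness[OF cost_mono[OF \<open>e \<in> E\<close>] cost_nonneg[OF \<open>e \<in> E\<close>]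
        cost_asymp[OF \<open>e \<in> E\<close>, unfolded \<open>q e = cost_degree\<close>] coeff_pos[OF \<open>e \<in> E\<close>]
        cost_degree_nonneg assms(3,4)] by blast
  then show ?thesis
    by blast
qed

lemma dominant_edges_bound:
  assumes "0 < \<eta>" "\<eta> \<le> 1"
  obtains A where "\<And>M g. 0 < M \<Longrightarrow> feasible P M g \<Longrightarrow>
    (cost_degree + 1) * (1 - \<eta>) * (\<Sum>e\<in>{e\<in>E. q e = cost_degree}. cross_cost M g e)
      \<le> (1 + \<eta>) * (cost_degree * eq_cost M + social_cost E c (load P g)) + A"
proof -
  define D where "D = {e\<in>E. q e = cost_degree}"
  have "\<forall>e\<in>D. \<exists>A. \<forall>x\<ge>0. \<forall>y\<ge>0. (cost_degree + 1) * (1 - \<eta>) * (y * c e x)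
      \<le> (1 + \<eta>) * (cost_degree * (x * c e x) + y * c e y) + A"
    unfolding D_def using dominant_edge_smoothness[OF _ _ assms] by blast
  then obtain A where A: "\<forall>e\<in>D. \<forall>x\<ge>0. \<forall>y\<ge>0. (cost_degree + 1) * (1 - \<eta>) * (y * c e x)
      \<le> (1 + \<eta>) * (cost_degree * (x * c e x) + y * c e y) + A e"
    by (rule bchoice[elim_format]) blast
  show ?thesis
  proof (rule that[of "sum A D"], unfold D_def[symmetric])
    fix M g assume "0 < M" "feasible P M g"
    have "(cost_degree + 1) * (1 - \<eta>) * (\<Sum>e\<in>D. cross_cost M g e)
        \<le> (\<Sum>e\<in>D. (1 + \<eta>) * (cost_degree * (eq_load M e * c e (eq_load M e))
          + load P g e * c e (load P g e)) + A e)"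
      unfolding sum_distrib_left
      using A load_nonneg[OF equilibrium_feasible[OF \<open>0 < M\<close>]] load_nonneg[OF \<open>feasible P M g\<close>]
      by (intro sum_mono) auto
    also have "\<dots> = (1 + \<eta>) * (cost_degree * (\<Sum>e\<in>D. eq_load M e * c e (eq_load M e))
        + (\<Sum>e\<in>D. load P g e * c e (load P g e))) + sum A D"
      by (simp add: sum.distrib flip: sum_distrib_left)
    also have "\<dots> \<le> (1 + \<eta>) * (cost_degree * eq_cost M + social_cost E c (load P g)) + sum A D"
      using partial_social_cost_le[OF equilibrium_feasible[OF \<open>0 < M\<close>]]
        partial_social_cost_le[OF \<open>feasible P M g\<close>] assms cost_degree_nonneg
      by (intro add_right_mono mult_left_mono add_mono) (auto simp: D_def)
    finally show "(cost_degree + 1) * (1 - \<eta>) * (\<Sum>e\<in>D. cross_cost M g e)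
        \<le> (1 + \<eta>) * (cost_degree * eq_cost M + social_cost E c (load P g)) + sum A D" .
  qed
qed

lemma eq_cost_bound:
  assumes "0 < \<eta>" "\<eta> \<le> 1"
  obtains A where "\<And>M g. 0 < M \<Longrightarrow> feasible P M g \<Longrightarrow>
    (1 - (2 * cost_degree + 1) * \<eta>) * eq_cost M \<le> (1 + \<eta>) * social_cost E c (load P g) + A
      + (cost_degree + 1) * (\<Sum>e\<in>{e\<in>E. q e \<noteq> cost_degree}. cross_cost M g e)"
proof -
  obtain A where A: "\<And>M g. 0 < M \<Longrightarrow> feasible P M g \<Longrightarrow>
      (cost_degree + 1) * (1 - \<eta>) * (\<Sum>e\<in>{e\<in>E. q e = cost_degree}. cross_cost M g e)
        \<le> (1 + \<eta>) * (cost_degree * eq_cost M + social_cost E c (load P g)) + A"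
    using dominant_edges_bound[OF assms] by blast
  show ?thesis
  proof (rule that[of A])
    fix M g assume "0 < M" and g: "feasible P M g"
    define d where "d = cost_degree"
    define SD where "SD = (\<Sum>e\<in>{e\<in>E. q e = d}. cross_cost M g e)"
    define SN where "SN = (\<Sum>e\<in>{e\<in>E. q e \<noteq> d}. cross_cost M g e)"
    have "(\<Sum>e\<in>E. cross_cost M g e) = SD + SN"
      unfolding SD_def SN_def using finite_edges
      by (simp add: sum.inter_filter flip: sum.distrib) (rule sum.cong; simp)
    then have "eq_cost M \<le> SD + SN"
      using wardrop_variational_inequality[OF equilibrium[OF \<open>0 < M\<close>] g] by simp
    moreover have "0 \<le> SN"
      unfolding SN_def using load_nonneg g cost_nonneg equilibrium_feasible[OF \<open>0 < M\<close>]
      by (intro sum_nonneg mult_nonneg_nonneg) auto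
    moreover have "0 \<le> d"
      using cost_degree_nonneg by (simp add: d_def)
    ultimately have "(d + 1) * (1 - \<eta>) * eq_cost M \<le> (d + 1) * (1 - \<eta>) * (SD + SN)"
      using assms by (intro mult_left_mono) auto
    also have "\<dots> = (d + 1) * (1 - \<eta>) * SD + (1 - \<eta>) * ((d + 1) * SN)"
      by (simp add: algebra_simps)
    also have "(1 - \<eta>) * ((d + 1) * SN) \<le> (d + 1) * SN"
      using assms \<open>0 \<le> d\<close> \<open>0 \<le> SN\<close> by (intro mult_left_le_one_le) auto
    also have "(d + 1) * (1 - \<eta>) * SD \<le> (1 + \<eta>) * (d * eq_cost M + social_cost E c (load P g)) + A"
      using A[OF \<open>0 < M\<close> g] by (simp add: SD_def d_def)
    finally show "(1 - (2 * cost_degree + 1) * \<eta>) * eq_cost M \<le> (1 + \<eta>) * social_cost E c (load P g) + A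
        + (cost_degree + 1) * (\<Sum>e\<in>{e\<in>E. q e \<noteq> cost_degree}. cross_cost M g e)"
      by (simp add: SN_def d_def algebra_simps)
  qed
qed

lemma eventually_eq_cost_bound:
  assumes "0 < \<eta>" "\<eta> \<le> 1" "0 < \<delta>"
  shows "eventually (\<lambda>M. \<forall>g. competitive_flow M g \<longrightarrow>
    (1 - (2 * cost_degree + 1) * \<eta>) * eq_cost M \<le> (1 + \<eta>) * social_cost E c (load P g)
      + \<delta> * M powr (cost_degree + 1)) at_top"
proof -
  obtain A where A: "\<And>M g. 0 < M \<Longrightarrow> feasible P M g \<Longrightarrow>
      (1 - (2 * cost_degree + 1) * \<eta>) * eq_cost M \<le> (1 + \<eta>) * social_cost E c (load P g) + A
        + (cost_degree + 1) * (\<Sum>e\<in>{e\<in>E. q e \<noteq> cost_degree}. cross_cost M g e)"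
    using eq_cost_bound[OF assms(1,2)] by blast
  have "eventually (\<lambda>M. \<bar>A\<bar> * M powr 0 \<le> \<delta> / 2 * M powr (cost_degree + 1)) at_top"
    using assms cost_degree_nonneg by (intro eventually_powr_dominates) auto
  moreover have "eventually (\<lambda>M. \<forall>g. competitive_flow M g \<longrightarrow> (\<Sum>e\<in>{e\<in>E. q e \<noteq> cost_degree}. cross_cost M g e)
      \<le> \<delta> / (2 * (cost_degree + 1)) * M powr (cost_degree + 1)) at_top"
    using assms cost_degree_nonneg by (intro nondominant_edges_negligible) simp
  ultimately show ?thesis
    using eventually_gt_at_top[of 0]
  proof eventually_elim
    case (elim M)
    show ?case
    proof (intro allI impI)
      fix g assume g: "competitive_flow M g"
      have "(cost_degree + 1) * (\<Sum>e\<in>{e\<in>E. q e \<noteq> cost_degree}. cross_cost M g e)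
          \<le> (cost_degree + 1) * (\<delta> / (2 * (cost_degree + 1)) * M powr (cost_degree + 1))"
        using elim g cost_degree_nonneg by (intro mult_left_mono) auto
      also have "\<dots> = \<delta> / 2 * M powr (cost_degree + 1)"
        using cost_degree_nonneg by (simp add: field_simps)
      finally show "(1 - (2 * cost_degree + 1) * \<eta>) * eq_cost M
          \<le> (1 + \<eta>) * social_cost E c (load P g) + \<delta> * M powr (cost_degree + 1)"
        using A[of M g] elim g abs_ge_self[of A] by simp
    qed
  qed
qed

lemma eq_cost_near_opt_cost:
  assumes "0 < \<eta>" "\<eta> \<le> 1"
  shows "eventually (\<lambda>M. 0 < opt_cost E c P M \<and>
    (1 - (2 * cost_degree + 1) * \<eta>) * eq_cost M \<le> (1 + 2 * \<eta>) * opt_cost E c P M) at_top"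
proof -
  obtain k where "0 < k" and k: "eventually (\<lambda>M. k * M powr (cost_degree + 1) \<le> opt_cost E c P M) at_top"
    by (rule opt_cost_growth)
  have "0 < \<eta> * k / 2"
    using assms \<open>0 < k\<close> by simp
  have "eventually (\<lambda>M. 2 * M powr 0 \<le> \<eta> * k / 2 * M powr (cost_degree + 1)) at_top"
    using assms \<open>0 < k\<close> cost_degree_nonneg by (intro eventually_powr_dominates) auto
  with k eventually_eq_cost_bound[OF assms \<open>0 < \<eta> * k / 2\<close>] eventually_gt_at_top[of 0]
  show ?thesis
  proof eventually_elim
    case (elim M)
    let ?Opt = "opt_cost E c P M" and ?W = "M powr (cost_degree + 1)"
    obtain g where g: "feasible P M g" "social_cost E c (load P g) < ?Opt + 1"
      using near_optimal_flow[of M 1] elim by auto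
    then have "competitive_flow M g"
      using opt_cost_le_eq_cost[OF \<open>0 < M\<close>] by simp
    have "0 < ?Opt"
      using elim \<open>0 < k\<close> by (smt (verit) mult_pos_pos powr_gt_zero)
    have "\<eta> / 2 * (k * ?W) \<le> \<eta> / 2 * ?Opt"
      using elim assms by (intro mult_left_mono) auto
    have "(1 - (2 * cost_degree + 1) * \<eta>) * eq_cost M \<le> (1 + \<eta>) * social_cost E c (load P g) + \<eta> * k / 2 * ?W"
      using elim \<open>competitive_flow M g\<close> by blast
    also have "\<dots> \<le> (1 + \<eta>) * (?Opt + 1) + \<eta> / 2 * ?Opt"
      using g(2) assms \<open>\<eta> / 2 * (k * ?W) \<le> \<eta> / 2 * ?Opt\<close>
      by (intro add_mono mult_left_mono) auto
    also have "\<dots> \<le> (1 + 2 * \<eta>) * ?Opt"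
    proof -
      have "1 + \<eta> \<le> \<eta> / 2 * (k * ?W)"
        using elim assms by simp
      with \<open>\<eta> / 2 * (k * ?W) \<le> \<eta> / 2 * ?Opt\<close> show ?thesis
        by (simp add: algebra_simps)
    qed
    finally show ?case
      using \<open>0 < ?Opt\<close> by simp
  qed
qed

lemma poa_tendsto_one: "((\<lambda>M. poa E c P M (feq M)) \<longlongrightarrow> 1) at_top"
proof -
  have "eventually (\<lambda>M. opt_cost E c P M \<le> eq_cost M) at_top"
    using eventually_gt_at_top[of 0] by eventually_elim (rule opt_cost_le_eq_cost)
  then have "((\<lambda>M. eq_cost M / opt_cost E c P M) \<longlongrightarrow> 1) at_top"
    using cost_degree_nonneg by (intro tendsto_ratio_one[OF _ _ _ eq_cost_near_opt_cost]) auto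
  moreover have "eventually (\<lambda>M. eq_cost M / opt_cost E c P M = poa E c P M (feq M)) at_top"
    using eq_cost_near_opt_cost[OF zero_less_one order.refl] by eventually_elim (simp add: poa_def)
  ultimately show ?thesis
    by (rule Lim_transform_eventually)
qed

end

theorem corollary4p8:
  fixes E :: "'e set" and src tgt :: "'e \<Rightarrow> 'v" and orig dest :: 'v
    and P :: "'e list set" and c :: "'e \<Rightarrow> real \<Rightarrow> real"
    and feq :: "real \<Rightarrow> 'e list \<Rightarrow> real"
  assumes "finite E"
    and "finite P" and "P \<noteq> {}"
    and "\<forall>p\<in>P. is_od_path src tgt E orig dest p"
    and "\<forall>e\<in>E. continuous_on {0..} (c e)"
    and "\<forall>e\<in>E. mono_on {0..} (c e)"
    and "\<forall>e\<in>E. \<forall>x\<ge>0. c e x \<ge> 0"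
    and "\<forall>e\<in>E. \<exists>q::real. q \<ge> 0 \<and> (\<exists>l::real. l \<noteq> 0 \<and>
            ((\<lambda>x. c e x / x powr q) \<longlongrightarrow> l) at_top)"
    and "\<forall>M>0. wardrop_eq c P M (feq M)"
  shows "((\<lambda>M. poa E c P M (feq M)) \<longlongrightarrow> 1) at_top"
proof -
  obtain q where q: "\<forall>e\<in>E. 0 \<le> q e \<and> (\<exists>l. l \<noteq> 0 \<and> ((\<lambda>x. c e x / x powr q e) \<longlongrightarrow> l) at_top)"
    using bchoice[OF assms(8)] ..
  then have "\<forall>e\<in>E. \<exists>l. l \<noteq> 0 \<and> ((\<lambda>x. c e x / x powr q e) \<longlongrightarrow> l) at_top"
    by simp
  then obtain l where l: "\<forall>e\<in>E. l e \<noteq> 0 \<and> ((\<lambda>x. c e x / x powr q e) \<longlongrightarrow> l e) at_top"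
    by (rule bchoice[THEN exE])
  interpret asymptotic_routing_game E P c q l feq
  proof unfold_locales
    show "0 < l e" if "e \<in> E" for e
      using l assms(7) that by (intro tendsto_ratio_limit_pos[of "c e" "q e"]) auto
  qed (use assms q l in \<open>simp_all add: is_od_path_def\<close>)
  show ?thesis
    by (rule poa_tendsto_one)
qed

end
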